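(* Against an oblivious adversary, if one of the two robots has zero wait time and zero computation delay in every cycle (while the other robot's wait times and computation delays are arbitrary nonnegative values chosen by the adversary), and the algorithm knows the speed ratio $\alpha$ of the robots, then it is possible to gather the two robots: there is a randomized algorithm such that the robots gather with positive probability.
   Context: Two robots are anonymous, oblivious (no memory of past cycles), silent (no communication) points in the Euclidean plane with no common coordinate system, each having access to random bits and moving at its own constant speed; $\alpha$ is the ratio of their speeds. Each robot repeatedly executes a cycle: it waits (wait time $\mathcal{W}$), looks (obtains a snapshot of the other robot's current position, which may be in motion), has a computation delay $\mathcal{C}$, then moves to a destination computed from the snapshot and its random bits, reaching it in the same cycle (rigid movement). A robot that looks and finds the other robot at its own position decides it has gathered and stops; gathering means both robots are at the same point. The scheduler is an adversary choosing wait times and computation delays; an oblivious adversary knows the algorithm but not the outcomes of random bits, so it fixes all these sequences before the execution. *)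

theory Defs
  imports "HOL-Probability.Probability"
begin

text \<open>The plane is modelled as the complex numbers.  Robots are indexed by bool;
  robot False is the robot with zero wait time and zero computation delay.\<close>

text \<open>A local coordinate system of a robot in a cycle: centred at the robot's current
  position, with an arbitrary similarity (rotation+scaling by a nonzero complex factor,
  optionally a reflection).\<close>
type_synonym frame = "complex \<times> bool"

definition to_global :: "complex \<Rightarrow> frame \<Rightarrow> complex \<Rightarrow> complex" where
  "to_global p F z = p + fst F * (if snd F then cnj z else z)"

definition to_local :: "complex \<Rightarrow> frame \<Rightarrow> complex \<Rightarrow> complex" where
  "to_local p F w = (let z = (w - p) / fst F in if snd F then cnj z else z)"

text \<open>An algorithm: given the known speed ratio alpha, the snapshot of the other robot
  (in local coordinates) and the random bits of the current cycle, it returns the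
  destination (in local coordinates).  Obliviousness: nothing else is input.\<close>
type_synonym algorithm = "real \<Rightarrow> complex \<Rightarrow> (nat \<Rightarrow> bool) \<Rightarrow> complex"

text \<open>Speed ratio (fast over slow); robots are anonymous.\<close>
definition speed_ratio :: "(bool \<Rightarrow> real) \<Rightarrow> real" where
  "speed_ratio s = max (s False) (s True) / min (s False) (s True)"

text \<open>A complete execution in which robot i performs exactly n i cycles, the last of which
  is the one in which it looks, sees the other robot at its own position, and stops.
  pos i t is the position of robot i at time t, T i k the start time of its k-th cycle.
  Given all parameters, this execution is unique if it exists.\<close>
definition execution ::
  "algorithm \<Rightarrow> real \<Rightarrow> (bool \<Rightarrow> real) \<Rightarrow> (bool \<Rightarrow> complex) \<Rightarrow> (bool \<Rightarrow> nat \<Rightarrow> frame)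
   \<Rightarrow> (bool \<Rightarrow> nat \<Rightarrow> real) \<Rightarrow> (bool \<Rightarrow> nat \<Rightarrow> real) \<Rightarrow> (bool \<Rightarrow> nat \<Rightarrow> nat \<Rightarrow> bool)
   \<Rightarrow> (bool \<Rightarrow> real \<Rightarrow> complex) \<Rightarrow> (bool \<Rightarrow> nat \<Rightarrow> real) \<Rightarrow> (bool \<Rightarrow> nat) \<Rightarrow> bool" where
  "execution alg \<alpha> s x0 F W C \<omega> pos T n \<longleftrightarrow>
    (\<forall>i. pos i 0 = x0 i \<and> T i 0 = 0 \<and> 0 < n i \<and>
      (\<forall>k < n i.
        (let p = pos i (T i k);
             tl = T i k + W i k;
             tm = tl + C i k;
             q = pos (\<not> i) tl;
             d = to_global p (F i k) (alg \<alpha> (to_local p (F i k) q) (\<omega> i k))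
         in if Suc k = n i then q = p \<and> (\<forall>t\<ge>T i k. pos i t = p)
            else q \<noteq> p \<and> T i (Suc k) = tm + cmod (d - p) / s i \<and>
                 (\<forall>t. T i k \<le> t \<and> t \<le> tm \<longrightarrow> pos i t = p) \<and>
                 (\<forall>t. tm \<le> t \<and> t \<le> T i (Suc k) \<longrightarrow>
                    pos i t = p + of_real ((t - tm) * s i / cmod (d - p)) * (d - p)))))"

definition gathered :: "(bool \<Rightarrow> real \<Rightarrow> complex) \<Rightarrow> bool" where
  "gathered pos \<longleftrightarrow> (\<exists>t p. \<forall>t'\<ge>t. pos False t' = p \<and> pos True t' = p)"

definition gathers ::
  "algorithm \<Rightarrow> real \<Rightarrow> (bool \<Rightarrow> real) \<Rightarrow> (bool \<Rightarrow> complex) \<Rightarrow> (bool \<Rightarrow> nat \<Rightarrow> frame)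
   \<Rightarrow> (bool \<Rightarrow> nat \<Rightarrow> real) \<Rightarrow> (bool \<Rightarrow> nat \<Rightarrow> real) \<Rightarrow> (bool \<Rightarrow> nat \<Rightarrow> nat \<Rightarrow> bool) \<Rightarrow> bool" where
  "gathers alg \<alpha> s x0 F W C \<omega> \<longleftrightarrow>
     (\<exists>pos T n. execution alg \<alpha> s x0 F W C \<omega> pos T n \<and> gathered pos)"

text \<open>Random bits: omega (i,k,j) is the j-th fair random bit of robot i in cycle k.\<close>
definition coin_space :: "(bool \<times> nat \<times> nat \<Rightarrow> bool) measure" where
  "coin_space = PiM UNIV (\<lambda>_. measure_pmf (bernoulli_pmf (1/2)))"

end

theory Submission
  imports Defs
begin

(* The algorithm always moves a robot to the point p + c (q - p) of the segment from its
   position p to the observed position q of the other robot; its random bits choose the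
   coefficient c among 1 (chase), 0 (wait), the meeting fraction f = s_self / (s_self + s_other)
   (computable from alpha and one guessed bit) and the approach fractions 1 - (1 - f/2)^m.  Every
   prescription of finitely many coefficients has positive probability, so it suffices to exhibit,
   for each adversary, one finite prescription under which the robots gather; all motion then
   takes place on the line through the initial positions.

   Let D be the initial distance and M the moment the delayed robot True starts its first move.
   If robot False covers D by time M, robot False chases and robot True waits.  Otherwise robot
   False first covers a fraction a of the way, late enough (s_False M < a D) that robot True has
   already seen it and is heading towards it, and early enough that robot True is still beyond
   it.  Robot False then moves the meeting fraction towards robot True and reaches the meeting
   point exactly when robot True passes it; robot False stops there and robot True returns to it
   in its second cycle.  Since consecutive powers of 1 - f/2 have ratio larger than 1 - f, some
   approach fraction falls into the window admissible for a. *)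

section \<open>Cylinder events of the coin space\<close>

lemma coin_space_cylinder:
  assumes "finite S"
  shows "{\<omega>. \<forall>x\<in>S. \<omega> x = b x} \<in> sets coin_space"
    and "0 < emeasure coin_space {\<omega>. \<forall>x\<in>S. \<omega> x = b x}"
proof -
  let ?M = "\<lambda>_::bool \<times> nat \<times> nat. measure_pmf (bernoulli_pmf (1/2))"
  have cyl: "{\<omega>. \<forall>x\<in>S. \<omega> x = b x} = prod_emb UNIV ?M S (\<Pi>\<^sub>E x\<in>S. {b x})"
    by (auto simp: prod_emb_def space_PiM PiE_def extensional_def restrict_def)
  show "{\<omega>. \<forall>x\<in>S. \<omega> x = b x} \<in> sets coin_space"
    unfolding coin_space_def cyl using assms by (intro sets_PiM_I) auto
  have "emeasure coin_space {\<omega>. \<forall>x\<in>S. \<omega> x = b x} = (\<Prod>x\<in>S. emeasure (?M x) {b x})"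
    unfolding coin_space_def cyl using assms
    by (intro emeasure_PiM_emb) (auto simp: prob_space_measure_pmf)
  also have "\<dots> = (\<Prod>x\<in>S. ennreal (1/2))"
    by (intro prod.cong refl) (cases "b x"; simp add: emeasure_pmf_single)
  also have "\<dots> = ennreal (1/2) ^ card S"
    by (rule prod_constant)
  also have "\<dots> = ennreal ((1/2) ^ card S)"
    by (rule ennreal_power) simp
  finally show "0 < emeasure coin_space {\<omega>. \<forall>x\<in>S. \<omega> x = b x}"
    by simp
qed

lemma coin_space_prefixes:
  fixes bs :: "bool \<times> nat \<Rightarrow> bool list"
  assumes "finite K"
  obtains A where "A \<in> sets coin_space" "0 < emeasure coin_space A"
    "\<And>\<omega> i k j. \<omega> \<in> A \<Longrightarrow> (i, k) \<in> K \<Longrightarrow> j < length (bs (i, k)) \<Longrightarrow> \<omega> (i, k, j) = bs (i, k) ! j"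
proof -
  define S where "S = (\<Union>(i, k)\<in>K. (\<lambda>j. (i, k, j)) ` {..<length (bs (i, k))})"
  define A where "A = {\<omega>. \<forall>(i, k, j)\<in>S. \<omega> (i, k, j) = bs (i, k) ! j}"
  have "finite S" using assms by (auto simp: S_def)
  then have "A \<in> sets coin_space" "0 < emeasure coin_space A"
    using coin_space_cylinder[of S "\<lambda>(i, k, j). bs (i, k) ! j"]
    unfolding A_def by (simp_all add: case_prod_unfold)
  moreover have "\<omega> (i, k, j) = bs (i, k) ! j"
    if "\<omega> \<in> A" "(i, k) \<in> K" "j < length (bs (i, k))" for \<omega> i k j
    using that by (auto simp: A_def S_def)
  ultimately show thesis by (rule that)
qed

section \<open>The algorithm\<close>

(* With alpha = fast / slow, meeting_fraction alpha faster is s_self / (s_self + s_other) when the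
   guess faster is right: moving this fraction of the way towards a robot that heads straight
   for the observer meets it. *)
definition meeting_fraction :: "real \<Rightarrow> bool \<Rightarrow> real" where
  "meeting_fraction \<alpha> faster = (if faster then \<alpha> / (1 + \<alpha>) else 1 / (1 + \<alpha>))"

definition gather_coef :: "real \<Rightarrow> (nat \<Rightarrow> bool) \<Rightarrow> real" where
  "gather_coef \<alpha> w =
     (if w 0 then (if w 1 then 1 else 0)
      else let f = meeting_fraction \<alpha> (w 2) in
        if w 1 then f else 1 - (1 - f / 2) ^ (LEAST j. \<not> w (j + 3)))"

definition gather_alg :: algorithm where
  "gather_alg \<alpha> z w = complex_of_real (gather_coef \<alpha> w) * z"

definition gather_coefs :: "real \<Rightarrow> real set" where
  "gather_coefs \<alpha> = {0, 1} \<union> range (meeting_fraction \<alpha>) \<union>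
     {1 - (1 - meeting_fraction \<alpha> faster / 2) ^ m | faster m. True}"

lemma gather_coef_prefix:
  assumes "c \<in> gather_coefs \<alpha>"
  obtains bs where "\<And>w. (\<And>j. j < length bs \<Longrightarrow> w j = bs ! j) \<Longrightarrow> gather_coef \<alpha> w = c"
proof -
  note prefix = that
  have three_bits: thesis if coef: "\<And>w. w 0 = x \<Longrightarrow> w 1 = y \<Longrightarrow> w 2 = z \<Longrightarrow> gather_coef \<alpha> w = c"
    for x y z
  proof (rule prefix[of "[x, y, z]"])
    fix w assume "\<And>j. j < length [x, y, z] \<Longrightarrow> w j = [x, y, z] ! j"
    from this[of 0] this[of 1] this[of 2] show "gather_coef \<alpha> w = c"
      by (intro coef) simp_all
  qed
  consider "c = 0" | "c = 1" | faster where "c = meeting_fraction \<alpha> faster"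
    | faster m where "c = 1 - (1 - meeting_fraction \<alpha> faster / 2) ^ m"
    using assms unfolding gather_coefs_def by blast
  then show ?thesis
  proof cases
    case 1
    show ?thesis by (rule three_bits[of True False False]) (simp add: 1 gather_coef_def)
  next
    case 2
    show ?thesis by (rule three_bits[of True True False]) (simp add: 2 gather_coef_def)
  next
    case (3 faster)
    show ?thesis by (rule three_bits[of False True faster]) (simp add: 3 gather_coef_def)
  next
    case (4 faster m)
    define bs where "bs = [False, False, faster] @ replicate m True @ [False]"
    show ?thesis
    proof (rule prefix[of bs])
      fix w assume w: "\<And>j. j < length bs \<Longrightarrow> w j = bs ! j"
      have "w (j + 3) = (j < m)" if "j \<le> m" for j
        using w[of "j + 3"] that by (auto simp: bs_def nth_append)
      then have "(LEAST j. \<not> w (j + 3)) = m"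
        by (intro Least_equality) (auto simp: not_less[symmetric])
      moreover have "\<not> w 0" "\<not> w 1" "w 2 = faster"
        using w[of 0] w[of 1] w[of 2] by (simp_all add: bs_def)
      ultimately show "gather_coef \<alpha> w = c"
        using 4 by (simp add: gather_coef_def)
    qed
  qed
qed

lemma coin_space_gather_coefs:
  assumes "finite K" and "\<And>i k. (i, k) \<in> K \<Longrightarrow> c i k \<in> gather_coefs \<alpha>"
  obtains A where "A \<in> sets coin_space" "0 < emeasure coin_space A"
    "\<And>\<omega> i k. \<omega> \<in> A \<Longrightarrow> (i, k) \<in> K \<Longrightarrow> gather_coef \<alpha> (\<lambda>j. \<omega> (i, k, j)) = c i k"
proof -
  have "\<forall>ik\<in>K. \<exists>bs. \<forall>w. (\<forall>j < length bs. w j = bs ! j) \<longrightarrow> gather_coef \<alpha> w = c (fst ik) (snd ik)"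
  proof
    fix ik assume "ik \<in> K"
    then obtain bs where "\<And>w. (\<And>j. j < length bs \<Longrightarrow> w j = bs ! j) \<Longrightarrow> gather_coef \<alpha> w = c (fst ik) (snd ik)"
      using gather_coef_prefix assms(2) by (metis prod.collapse)
    then show "\<exists>bs. \<forall>w. (\<forall>j < length bs. w j = bs ! j) \<longrightarrow> gather_coef \<alpha> w = c (fst ik) (snd ik)"
      by blast
  qed
  then obtain bs where bs: "\<And>ik w. ik \<in> K \<Longrightarrow> \<forall>j < length (bs ik). w j = bs ik ! j \<Longrightarrow>
      gather_coef \<alpha> w = c (fst ik) (snd ik)"
    by metis
  obtain A where A_sets: "A \<in> sets coin_space" and A_pos: "0 < emeasure coin_space A"
    and A: "\<And>\<omega> i k j. \<omega> \<in> A \<Longrightarrow> (i, k) \<in> K \<Longrightarrow> j < length (bs (i, k)) \<Longrightarrow> \<omega> (i, k, j) = bs (i, k) ! j"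
    by (rule coin_space_prefixes[where bs = bs, OF assms(1)]) blast
  have "gather_coef \<alpha> (\<lambda>j. \<omega> (i, k, j)) = c i k" if "\<omega> \<in> A" "(i, k) \<in> K" for \<omega> i k
    using bs[of "(i, k)" "\<lambda>j. \<omega> (i, k, j)"] A[OF that] that(2) by simp
  with A_sets A_pos show thesis by (rule that)
qed

lemma meeting_fraction_speed_ratio:
  assumes "0 < s False" "0 < s True"
  shows "meeting_fraction (speed_ratio s) (s (\<not> i) \<le> s i) = s i / (s i + s (\<not> i))"
proof -
  have ratio: "speed_ratio s = max (s i) (s (\<not> i)) / min (s i) (s (\<not> i))"
    by (cases i) (simp_all add: speed_ratio_def max.commute min.commute)
  have pos: "0 < s i" "0 < s (\<not> i)" using assms by (cases i; simp)+
  show ?thesis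
  proof (cases "s (\<not> i) \<le> s i")
    case True
    then have \<alpha>: "speed_ratio s = s i / s (\<not> i)" by (simp add: ratio max_absorb1 min_absorb2)
    show ?thesis using True pos by (simp add: meeting_fraction_def \<alpha> divide_simps)
  next
    case False
    then have \<alpha>: "speed_ratio s = s (\<not> i) / s i" by (simp add: ratio max_absorb2 min_absorb1)
    show ?thesis using False pos by (simp add: meeting_fraction_def \<alpha> divide_simps)
  qed
qed

section \<open>Executions on a line\<close>

(* Cycle k of robot i in an execution on the line b + R u: robot i is at b + r i t * u at time t,
   v i = s i / |u| is its speed in these coordinates and c i k the coefficient it uses. *)
definition line_cycle ::
  "(bool \<Rightarrow> real \<Rightarrow> real) \<Rightarrow> (bool \<Rightarrow> nat \<Rightarrow> real) \<Rightarrow> (bool \<Rightarrow> nat) \<Rightarrow> (bool \<Rightarrow> nat \<Rightarrow> real)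
   \<Rightarrow> (bool \<Rightarrow> nat \<Rightarrow> real) \<Rightarrow> (bool \<Rightarrow> real) \<Rightarrow> (bool \<Rightarrow> nat \<Rightarrow> real) \<Rightarrow> bool \<Rightarrow> nat \<Rightarrow> bool" where
  "line_cycle r T n W C v c i k \<longleftrightarrow>
    (let p = r i (T i k); tl = T i k + W i k; tm = tl + C i k; q = r (\<not> i) tl;
         e = p + c i k * (q - p)
     in if Suc k = n i then q = p \<and> (\<forall>t\<ge>T i k. r i t = p)
        else q \<noteq> p \<and> T i (Suc k) = tm + \<bar>e - p\<bar> / v i \<and>
          (\<forall>t. T i k \<le> t \<and> t \<le> tm \<longrightarrow> r i t = p) \<and>
          (\<forall>t. tm \<le> t \<and> t \<le> T i (Suc k) \<longrightarrow> r i t = p + (t - tm) * v i * sgn (e - p)))"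

lemma line_cycle_stop:
  assumes "Suc k = n i" and "r i (T i k) = p" and "r (\<not> i) (T i k + W i k) = p"
    and "\<And>t. T i k \<le> t \<Longrightarrow> r i t = p"
  shows "line_cycle r T n W C v c i k"
  using assms by (simp add: line_cycle_def Let_def)

lemma line_cycle_move:
  assumes "Suc k \<noteq> n i" and "r i (T i k) = p" and "r (\<not> i) (T i k + W i k) = q" and "q \<noteq> p"
    and "T i k + W i k + C i k = tm" and "c i k * (q - p) = d" and "T i (Suc k) = tm + \<bar>d\<bar> / v i"
    and "\<And>t. T i k \<le> t \<Longrightarrow> t \<le> tm \<Longrightarrow> r i t = p"
    and "\<And>t. tm \<le> t \<Longrightarrow> t \<le> T i (Suc k) \<Longrightarrow> r i t = p + (t - tm) * v i * sgn d"
  shows "line_cycle r T n W C v c i k"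
  using assms by (simp add: line_cycle_def Let_def)

lemma gather_alg_global:
  assumes "fst Fr \<noteq> 0"
  shows "to_global p Fr (gather_alg \<alpha> (to_local p Fr q) w) = p + of_real (gather_coef \<alpha> w) * (q - p)"
  using assms by (cases "snd Fr") (auto simp: to_global_def to_local_def gather_alg_def Let_def)

lemma move_on_line:
  fixes u :: complex
  assumes "u \<noteq> 0"
  shows "b + of_real x * u + of_real (\<tau> * s / (\<bar>z\<bar> * cmod u)) * (of_real z * u)
         = b + of_real (x + \<tau> * (s / cmod u) * sgn z) * u"
proof (cases "z = 0")
  case False
  then have "z / \<bar>z\<bar> = sgn z" by (simp add: sgn_if)
  moreover have "of_real (\<tau> * s / (\<bar>z\<bar> * cmod u)) * (of_real z * u)
      = of_real (\<tau> * (s / cmod u) * (z / \<bar>z\<bar>)) * u"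
    using assms by (simp add: norm_mult field_simps)
  ultimately show ?thesis by (simp add: algebra_simps)
qed simp

lemma cycle_on_line:
  fixes r :: "bool \<Rightarrow> real \<Rightarrow> real" and b u :: complex
  assumes u: "u \<noteq> 0" and frame: "fst Fr \<noteq> 0"
    and cycle: "line_cycle r T n W C (\<lambda>i. s i / cmod u) c i k" and coef: "c i k = gather_coef \<alpha> w"
  shows "let p = b + of_real (r i (T i k)) * u; tl = T i k + W i k; tm = tl + C i k;
             q = b + of_real (r (\<not> i) tl) * u;
             d = to_global p Fr (gather_alg \<alpha> (to_local p Fr q) w)
         in if Suc k = n i then q = p \<and> (\<forall>t\<ge>T i k. b + of_real (r i t) * u = p)
            else q \<noteq> p \<and> T i (Suc k) = tm + cmod (d - p) / s i \<and>
                 (\<forall>t. T i k \<le> t \<and> t \<le> tm \<longrightarrow> b + of_real (r i t) * u = p) \<and>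
                 (\<forall>t. tm \<le> t \<and> t \<le> T i (Suc k) \<longrightarrow>
                    b + of_real (r i t) * u = p + of_real ((t - tm) * s i / cmod (d - p)) * (d - p))"
proof -
  define x where "x = r i (T i k)"
  define tm where "tm = T i k + W i k + C i k"
  define y where "y = r (\<not> i) (T i k + W i k)"
  define z where "z = c i k * (y - x)"
  have dest: "to_global (b + of_real x * u) Fr (gather_alg \<alpha> (to_local (b + of_real x * u) Fr (b + of_real y * u)) w)
      - (b + of_real x * u) = of_real z * u"
    unfolding gather_alg_global[OF frame] z_def coef by (simp add: algebra_simps)
  have norm: "cmod (of_real z * u) = \<bar>z\<bar> * cmod u"
    by (simp add: norm_mult)
  have inj: "b + of_real v * u = b + of_real v' * u \<longleftrightarrow> v = v'" for v v'
    using u by auto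
  have "if Suc k = n i then y = x \<and> (\<forall>t\<ge>T i k. r i t = x)
        else y \<noteq> x \<and> T i (Suc k) = tm + \<bar>z\<bar> * cmod u / s i \<and>
          (\<forall>t. T i k \<le> t \<and> t \<le> tm \<longrightarrow> r i t = x) \<and>
          (\<forall>t. tm \<le> t \<and> t \<le> T i (Suc k) \<longrightarrow> r i t = x + (t - tm) * (s i / cmod u) * sgn z)"
    using cycle unfolding line_cycle_def Let_def x_def[symmetric] y_def[symmetric] tm_def[symmetric] z_def[symmetric]
    by simp
  then show ?thesis
    unfolding Let_def x_def[symmetric] y_def[symmetric] tm_def[symmetric] dest norm
      move_on_line[OF u] inj
    by simp
qed

lemma execution_on_line:
  fixes r :: "bool \<Rightarrow> real \<Rightarrow> real" and b u :: complex
  assumes u: "u \<noteq> 0" and start: "\<And>i. x0 i = b + of_real (r i 0) * u"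
    and frames: "\<And>i k. fst (F i k) \<noteq> 0"
    and "\<And>i. T i 0 = 0" "\<And>i. 0 < n i"
    and cycles: "\<And>i k. k < n i \<Longrightarrow>
      line_cycle r T n W C (\<lambda>i. s i / cmod u) (\<lambda>i k. gather_coef \<alpha> (\<omega> i k)) i k"
  shows "execution gather_alg \<alpha> s x0 F W C \<omega> (\<lambda>i t. b + of_real (r i t) * u) T n"
  unfolding execution_def
  using assms cycle_on_line[OF u frames cycles refl] by simp

section \<open>Gathering scenarios\<close>

definition line_gathering ::
  "(bool \<Rightarrow> nat \<Rightarrow> real) \<Rightarrow> (bool \<Rightarrow> nat \<Rightarrow> real) \<Rightarrow> (bool \<Rightarrow> real) \<Rightarrow> (bool \<Rightarrow> nat \<Rightarrow> real) \<Rightarrow> bool" where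
  "line_gathering W C v c \<longleftrightarrow>
    (\<exists>r T n t\<^sub>0 g. r False 0 = 0 \<and> r True 0 = 1 \<and>
      (\<forall>i. T i 0 = 0 \<and> 0 < n i \<and> (\<forall>k < n i. line_cycle r T n W C v c i k)) \<and>
      (\<forall>i t. t\<^sub>0 \<le> t \<longrightarrow> r i t = g))"

lemma line_gatheringI:
  assumes "r False 0 = 0" "r True 0 = 1" "\<And>i. T i 0 = 0" "\<And>i. 0 < n i"
    and "\<And>i k. k < n i \<Longrightarrow> line_cycle r T n W C v c i k"
    and "\<And>i t. t\<^sub>0 \<le> t \<Longrightarrow> r i t = g"
  shows "line_gathering W C v c"
  using assms unfolding line_gathering_def by blast

lemma gathers_if_line_gathering:
  assumes distinct: "x0 True \<noteq> x0 False" and frames: "\<And>i k. fst (F i k) \<noteq> 0"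
    and "line_gathering W C (\<lambda>i. s i / cmod (x0 True - x0 False)) (\<lambda>i k. gather_coef \<alpha> (\<omega> i k))"
  shows "gathers gather_alg \<alpha> s x0 F W C \<omega>"
proof -
  define u where "u = x0 True - x0 False"
  obtain r T n t\<^sub>0 g where start: "r False 0 = 0" "r True 0 = 1"
    and cycles: "\<And>i. T i 0 = 0 \<and> 0 < n i \<and> (\<forall>k < n i.
      line_cycle r T n W C (\<lambda>i. s i / cmod u) (\<lambda>i k. gather_coef \<alpha> (\<omega> i k)) i k)"
    and final: "\<And>i t. t\<^sub>0 \<le> t \<Longrightarrow> r i t = g"
    using assms(3) unfolding line_gathering_def u_def by blast
  have u: "u \<noteq> 0" using distinct by (simp add: u_def)
  have x0: "x0 i = x0 False + of_real (r i 0) * u" for i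
    using start by (cases i) (simp_all add: u_def)
  have "execution gather_alg \<alpha> s x0 F W C \<omega> (\<lambda>i t. x0 False + of_real (r i t) * u) T n"
    by (rule execution_on_line[where b = "x0 False" and r = r and u = u, OF u x0 frames]) (use cycles in blast)+
  moreover have "gathered (\<lambda>i t. x0 False + of_real (r i t) * u)"
    unfolding gathered_def by (intro exI[of _ t\<^sub>0] exI[of _ "x0 False + of_real g * u"]) (simp add: final)
  ultimately show ?thesis unfolding gathers_def by blast
qed

lemma gathers_coincident:
  assumes "x0 True = x0 False"
  shows "gathers alg \<alpha> s x0 F W C \<omega>"
proof -
  have same: "x0 (\<not> i) = x0 i" for i
    using assms by (cases i) simp_all
  have "execution alg \<alpha> s x0 F W C \<omega> (\<lambda>i t. x0 i) (\<lambda>i k. 0) (\<lambda>i. 1)"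
    unfolding execution_def by (simp add: Let_def same)
  moreover have "gathered (\<lambda>i t. x0 i)"
    unfolding gathered_def using assms by (intro exI[of _ 0] exI[of _ "x0 False"]) simp
  ultimately show ?thesis unfolding gathers_def by blast
qed

lemma line_gathering_chase:
  assumes speed: "0 < v False"
    and undelayed: "\<And>k. W False k = 0" "\<And>k. C False k = 0"
    and delays: "\<And>k. 0 \<le> W True k" "\<And>k. 0 \<le> C True k"
    and reached: "1 / v False \<le> W True 0 + C True 0"
    and chase: "c False 0 = 1" and wait: "c True 0 = 0"
  shows "line_gathering W C v c"
proof -
  define arrival where "arrival = 1 / v False"
  define r where "r i t = (if i then 1 else min 1 (t * v False))" for i t
  define T where "T i (k::nat) = (if k = 0 then 0 else if i then W True 0 + C True 0 else arrival)" for i k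
  define n where "n i = (if i \<and> arrival \<le> W True 0 then 1 else 2 :: nat)" for i
  have stay: "r True t = 1" for t
    by (simp add: r_def)
  have arrived: "r i t = 1" if "arrival \<le> t" for i t
    using that speed by (simp add: r_def arrival_def field_simps)
  have approach: "r False t = t * v False" if "t \<le> arrival" for t
    using that speed by (simp add: r_def arrival_def field_simps)
  show ?thesis
  proof (rule line_gatheringI[where r = r and T = T and n = n and t\<^sub>0 = arrival and g = 1])
    show "r False 0 = 0" using approach[of 0] speed by (simp add: arrival_def)
    show "line_cycle r T n W C v c i k" if "k < n i" for i k
    proof (cases i)
      case False
      with that show ?thesis
        using speed undelayed chase arrived approach stay
        by (auto simp: line_cycle_def Let_def T_def n_def less_2_cases_iff arrival_def)
    next
      case True
      have "r False (W True 0 + C True 0 + W True 1) = 1"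
        using reached delays by (intro arrived) (simp add: arrival_def add_increasing2)
      with True that show ?thesis
        using reached delays[of 0] wait arrived approach stay speed
        by (auto simp: line_cycle_def Let_def T_def n_def less_2_cases_iff arrival_def field_simps)
    qed
  qed (simp_all add: arrived stay T_def n_def)
qed

locale meeting_run =
  fixes W C :: "bool \<Rightarrow> nat \<Rightarrow> real" and v :: "bool \<Rightarrow> real" and c :: "bool \<Rightarrow> nat \<Rightarrow> real"
    and a :: real
  assumes speeds: "0 < v False" "0 < v True"
    and undelayed: "\<And>k. W False k = 0" "\<And>k. C False k = 0"
    and delays: "\<And>k. 0 \<le> W True k" "\<And>k. 0 \<le> C True k"
    and late: "W True 0 + C True 0 < a / v False"
    and ahead: "a < 1 - (a / v False - (W True 0 + C True 0)) * v True"
    and coefs: "c False 0 = a" "c False 1 = v False / (v False + v True)" "c True 0 = 1" "c True 1 = 1"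
begin

(* Robot True sees robot False at r_0 and moves towards it from M to T_1; robot False reaches a
   at tau_1, sees robot True at q_1 and meets it at g at time tau_2; robot True starts back at M_1
   and reaches g at T_2. *)
definition "M = W True 0 + C True 0"
definition "\<tau>\<^sub>1 = a / v False"
definition "r\<^sub>0 = v False * W True 0"
definition "q\<^sub>1 = 1 - (\<tau>\<^sub>1 - M) * v True"
definition "f = v False / (v False + v True)"
definition "g = a + f * (q\<^sub>1 - a)"
definition "\<tau>\<^sub>2 = \<tau>\<^sub>1 + f * (q\<^sub>1 - a) / v False"
definition "T\<^sub>1 = M + (1 - r\<^sub>0) / v True"
definition "M\<^sub>1 = T\<^sub>1 + W True 1 + C True 1"
definition "T\<^sub>2 = M\<^sub>1 + (g - r\<^sub>0) / v True"

definition track :: "bool \<Rightarrow> real \<Rightarrow> real" where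
  "track i t =
    (if i then
       if t \<le> M then 1 else if t \<le> T\<^sub>1 then 1 - (t - M) * v True
       else if t \<le> M\<^sub>1 then r\<^sub>0 else if t \<le> T\<^sub>2 then r\<^sub>0 + (t - M\<^sub>1) * v True else g
     else
       if t \<le> \<tau>\<^sub>1 then t * v False else if t \<le> \<tau>\<^sub>2 then a + (t - \<tau>\<^sub>1) * v False else g)"

definition cycle_start :: "bool \<Rightarrow> nat \<Rightarrow> real" where
  "cycle_start i k = (if k = 0 then 0 else if k = 1 then (if i then T\<^sub>1 else \<tau>\<^sub>1) else if i then T\<^sub>2 else \<tau>\<^sub>2)"

lemma f_ratio: "0 < f" "f * v True / v False = 1 - f"
proof -
  show "0 < f" using speeds by (simp add: f_def)
  have "v False * (v False * v True) + v False * (v True * v True)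
      = v True * (v False * v False + v False * v True)"
    by algebra
  moreover have "0 < v False * v False + v False * v True" using speeds by (simp add: add_pos_pos)
  ultimately show "f * v True / v False = 1 - f"
    using speeds by (simp add: f_def field_simps)
qed

lemma schedule:
  shows "0 \<le> W True 0" "W True 0 \<le> M" "M < \<tau>\<^sub>1" "r\<^sub>0 < a" "0 < a" "a < q\<^sub>1" "q\<^sub>1 < 1"
    and "a < g" "\<tau>\<^sub>1 < \<tau>\<^sub>2" "\<tau>\<^sub>2 < T\<^sub>1" "T\<^sub>1 \<le> M\<^sub>1" "M\<^sub>1 < T\<^sub>2"
    and "1 - (\<tau>\<^sub>2 - M) * v True = g" "1 - (T\<^sub>1 - M) * v True = r\<^sub>0" "r\<^sub>0 + (T\<^sub>2 - M\<^sub>1) * v True = g"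
proof -
  show W0: "0 \<le> W True 0" "W True 0 \<le> M" using delays[of 0] by (simp_all add: M_def)
  show M: "M < \<tau>\<^sub>1" using late by (simp add: M_def \<tau>\<^sub>1_def)
  show r0: "r\<^sub>0 < a"
  proof -
    have "v False * W True 0 \<le> v False * M" using W0 speeds by simp
    moreover have "v False * M < a" using M speeds by (simp add: \<tau>\<^sub>1_def field_simps)
    ultimately show ?thesis by (simp add: r\<^sub>0_def)
  qed
  show a: "0 < a"
  proof -
    have "0 \<le> r\<^sub>0" using W0 speeds by (simp add: r\<^sub>0_def)
    with r0 show ?thesis by linarith
  qed
  show q: "a < q\<^sub>1" using ahead by (simp add: q\<^sub>1_def \<tau>\<^sub>1_def M_def)
  show "q\<^sub>1 < 1" using M speeds by (simp add: q\<^sub>1_def)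
  show g: "a < g" using q f_ratio by (simp add: g_def)
  show "\<tau>\<^sub>1 < \<tau>\<^sub>2" using q f_ratio speeds by (simp add: \<tau>\<^sub>2_def)
  show meet: "1 - (\<tau>\<^sub>2 - M) * v True = g"
  proof -
    have "1 - (\<tau>\<^sub>2 - M) * v True = q\<^sub>1 - f * v True / v False * (q\<^sub>1 - a)"
      using speeds by (simp add: \<tau>\<^sub>2_def q\<^sub>1_def field_simps)
    then show ?thesis by (simp add: f_ratio g_def algebra_simps)
  qed
  show turn: "1 - (T\<^sub>1 - M) * v True = r\<^sub>0" using speeds by (simp add: T\<^sub>1_def)
  show "\<tau>\<^sub>2 < T\<^sub>1"
  proof -
    have "1 - (T\<^sub>1 - M) * v True < 1 - (\<tau>\<^sub>2 - M) * v True" using meet turn r0 g by simp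
    then show ?thesis using speeds by simp
  qed
  show "T\<^sub>1 \<le> M\<^sub>1" using delays by (simp add: M\<^sub>1_def)
  show "M\<^sub>1 < T\<^sub>2" using r0 g speeds by (simp add: T\<^sub>2_def)
  show "r\<^sub>0 + (T\<^sub>2 - M\<^sub>1) * v True = g" using speeds by (simp add: T\<^sub>2_def)
qed

lemma track_False:
  shows "t \<le> \<tau>\<^sub>1 \<Longrightarrow> track False t = t * v False"
    and "\<tau>\<^sub>1 \<le> t \<Longrightarrow> t \<le> \<tau>\<^sub>2 \<Longrightarrow> track False t = a + (t - \<tau>\<^sub>1) * v False"
    and "\<tau>\<^sub>2 \<le> t \<Longrightarrow> track False t = g"
proof -
  have arrive: "\<tau>\<^sub>1 * v False = a" and meet: "a + (\<tau>\<^sub>2 - \<tau>\<^sub>1) * v False = g"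
    using speeds by (simp_all add: \<tau>\<^sub>1_def \<tau>\<^sub>2_def g_def)
  show "t \<le> \<tau>\<^sub>1 \<Longrightarrow> track False t = t * v False" by (simp add: track_def)
  show "\<tau>\<^sub>1 \<le> t \<Longrightarrow> t \<le> \<tau>\<^sub>2 \<Longrightarrow> track False t = a + (t - \<tau>\<^sub>1) * v False"
    using arrive by (auto simp: track_def)
  show "\<tau>\<^sub>2 \<le> t \<Longrightarrow> track False t = g"
    using meet schedule by (auto simp: track_def)
qed

lemma track_True:
  shows "t \<le> M \<Longrightarrow> track True t = 1"
    and "M \<le> t \<Longrightarrow> t \<le> T\<^sub>1 \<Longrightarrow> track True t = 1 - (t - M) * v True"
    and "T\<^sub>1 \<le> t \<Longrightarrow> t \<le> M\<^sub>1 \<Longrightarrow> track True t = r\<^sub>0"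
    and "M\<^sub>1 \<le> t \<Longrightarrow> t \<le> T\<^sub>2 \<Longrightarrow> track True t = r\<^sub>0 + (t - M\<^sub>1) * v True"
    and "T\<^sub>2 \<le> t \<Longrightarrow> track True t = g"
  using schedule by (auto simp: track_def)

lemma cycles_False:
  assumes "k < 3"
  shows "line_cycle track cycle_start (\<lambda>_. 3) W C v c False k"
proof -
  have a: "0 < a" and f: "0 < f" and q: "0 < q\<^sub>1 - a"
    using schedule f_ratio by simp_all
  consider "k = 0" | "k = 1" | "k = 2" using assms by linarith
  then show ?thesis
  proof cases
    case 1
    show ?thesis
    proof (rule line_cycle_move[where p = 0 and q = 1 and tm = 0 and d = a])
      show "track False (cycle_start False k) = 0" "track (\<not> False) (cycle_start False k + W False k) = 1"
        using schedule by (simp_all add: 1 cycle_start_def undelayed track_False track_True)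
      show "cycle_start False (Suc k) = 0 + \<bar>a\<bar> / v False"
        using a by (simp add: 1 cycle_start_def \<tau>\<^sub>1_def)
      show "track False t = 0 + (t - 0) * v False * sgn a" if "0 \<le> t" "t \<le> cycle_start False (Suc k)" for t
        using that a by (simp add: 1 cycle_start_def track_False)
    qed (use schedule in \<open>simp_all add: 1 cycle_start_def undelayed coefs track_False\<close>)
  next
    case 2
    show ?thesis
    proof (rule line_cycle_move[where p = a and q = "q\<^sub>1" and tm = "\<tau>\<^sub>1" and d = "f * (q\<^sub>1 - a)"])
      show "track False (cycle_start False k) = a" "track (\<not> False) (cycle_start False k + W False k) = q\<^sub>1"
        using schedule speeds by (simp_all add: 2 cycle_start_def undelayed track_False track_True q\<^sub>1_def \<tau>\<^sub>1_def)
      show "cycle_start False (Suc k) = \<tau>\<^sub>1 + \<bar>f * (q\<^sub>1 - a)\<bar> / v False"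
        using f q by (simp add: 2 cycle_start_def \<tau>\<^sub>2_def)
      show "track False t = a + (t - \<tau>\<^sub>1) * v False * sgn (f * (q\<^sub>1 - a))"
        if "\<tau>\<^sub>1 \<le> t" "t \<le> cycle_start False (Suc k)" for t
        using that f q by (simp add: 2 cycle_start_def track_False sgn_mult)
      show "track False t = a" if "cycle_start False k \<le> t" "t \<le> \<tau>\<^sub>1" for t
        using that speeds by (simp add: 2 cycle_start_def track_False \<tau>\<^sub>1_def)
      show "c False k * (q\<^sub>1 - a) = f * (q\<^sub>1 - a)"
        using coefs by (simp add: 2 f_def)
    qed (use q in \<open>simp_all add: 2 cycle_start_def undelayed\<close>)
  next
    case 3
    show ?thesis
    proof (rule line_cycle_stop[where p = g])
      show "track (\<not> False) (cycle_start False k + W False k) = g"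
        using schedule by (simp add: 3 cycle_start_def undelayed track_True)
      show "track False t = g" if "cycle_start False k \<le> t" for t
        using that by (simp add: 3 cycle_start_def track_False(3))
    qed (simp_all add: 3 cycle_start_def track_False(3))
  qed
qed

lemma cycles_True:
  assumes "k < 3"
  shows "line_cycle track cycle_start (\<lambda>_. 3) W C v c True k"
proof -
  have order: "r\<^sub>0 < 1" "r\<^sub>0 < g" "\<tau>\<^sub>2 < T\<^sub>1"
    using schedule by simp_all
  consider "k = 0" | "k = 1" | "k = 2" using assms by linarith
  then show ?thesis
  proof cases
    case 1
    show ?thesis
    proof (rule line_cycle_move[where p = 1 and q = "r\<^sub>0" and tm = M and d = "r\<^sub>0 - 1"])
      show "track True (cycle_start True k) = 1"
        using schedule by (simp add: 1 cycle_start_def track_True)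
      show "track (\<not> True) (cycle_start True k + W True k) = r\<^sub>0"
        using schedule by (simp add: 1 cycle_start_def track_False r\<^sub>0_def mult.commute)
      show "cycle_start True (Suc k) = M + \<bar>r\<^sub>0 - 1\<bar> / v True"
        using order by (simp add: 1 cycle_start_def T\<^sub>1_def)
      show "track True t = 1 + (t - M) * v True * sgn (r\<^sub>0 - 1)"
        if "M \<le> t" "t \<le> cycle_start True (Suc k)" for t
        using that order by (simp add: 1 cycle_start_def track_True)
    qed (use order in \<open>simp_all add: 1 cycle_start_def coefs M_def track_True\<close>)
  next
    case 2
    show ?thesis
    proof (rule line_cycle_move[where p = "r\<^sub>0" and q = g and tm = "M\<^sub>1" and d = "g - r\<^sub>0"])
      show "track True (cycle_start True k) = r\<^sub>0"
        using schedule by (simp add: 2 cycle_start_def track_True)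
      have "\<tau>\<^sub>2 \<le> T\<^sub>1 + W True 1" using order delays[of 1] by simp
      then show "track (\<not> True) (cycle_start True k + W True k) = g"
        by (simp add: 2 cycle_start_def track_False)
      show "cycle_start True (Suc k) = M\<^sub>1 + \<bar>g - r\<^sub>0\<bar> / v True"
        using order by (simp add: 2 cycle_start_def T\<^sub>2_def)
      show "track True t = r\<^sub>0" if "cycle_start True k \<le> t" "t \<le> M\<^sub>1" for t
        using that by (simp add: 2 cycle_start_def track_True)
      show "track True t = r\<^sub>0 + (t - M\<^sub>1) * v True * sgn (g - r\<^sub>0)"
        if "M\<^sub>1 \<le> t" "t \<le> cycle_start True (Suc k)" for t
        using that order by (simp add: 2 cycle_start_def track_True)
      show "c True k * (g - r\<^sub>0) = g - r\<^sub>0"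
        using coefs by (simp add: 2)
    qed (use order in \<open>simp_all add: 2 cycle_start_def M\<^sub>1_def\<close>)
  next
    case 3
    show ?thesis
    proof (rule line_cycle_stop[where p = g])
      have "\<tau>\<^sub>2 \<le> T\<^sub>2 + W True 2" using schedule delays[of 2] by linarith
      then show "track (\<not> True) (cycle_start True k + W True k) = g"
        by (simp add: 3 cycle_start_def track_False(3))
      show "track True t = g" if "cycle_start True k \<le> t" for t
        using that by (simp add: 3 cycle_start_def track_True(5))
    qed (simp_all add: 3 cycle_start_def track_True(5))
  qed
qed

lemma line_gathering_meeting: "line_gathering W C v c"
proof (rule line_gatheringI[where r = track and T = cycle_start and n = "\<lambda>_. 3" and t\<^sub>0 = T\<^sub>2 and g = g])
  show "track False 0 = 0" "track True 0 = 1"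
    using schedule by (simp_all add: track_False track_True)
  show "line_cycle track cycle_start (\<lambda>_. 3) W C v c i k" if "k < 3" for i k
    using that cycles_False cycles_True by (cases i) auto
  show "track i t = g" if "T\<^sub>2 \<le> t" for i t
    using that schedule track_False(3) track_True(5) by (cases i) auto
qed (simp_all add: cycle_start_def)

end

section \<open>Gathering with positive probability\<close>

definition gathers_with_positive_probability ::
  "algorithm \<Rightarrow> (bool \<Rightarrow> real) \<Rightarrow> (bool \<Rightarrow> complex) \<Rightarrow> (bool \<Rightarrow> nat \<Rightarrow> frame)
   \<Rightarrow> (bool \<Rightarrow> nat \<Rightarrow> real) \<Rightarrow> (bool \<Rightarrow> nat \<Rightarrow> real) \<Rightarrow> bool" where
  "gathers_with_positive_probability alg s x0 F W C \<longleftrightarrow>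
     (\<exists>A\<in>sets coin_space. 0 < emeasure coin_space A \<and>
        (\<forall>\<omega>\<in>A. gathers alg (speed_ratio s) s x0 F W C (\<lambda>i k j. \<omega> (i, k, j))))"

lemma positive_probability_if_line_gathering:
  assumes distinct: "x0 True \<noteq> x0 False" and frames: "\<And>i k. fst (F i k) \<noteq> 0"
    and "finite K" and "\<And>i k. (i, k) \<in> K \<Longrightarrow> c i k \<in> gather_coefs (speed_ratio s)"
    and gathering: "\<And>c'. (\<And>i k. (i, k) \<in> K \<Longrightarrow> c' i k = c i k) \<Longrightarrow>
      line_gathering W C (\<lambda>i. s i / cmod (x0 True - x0 False)) c'"
  shows "gathers_with_positive_probability gather_alg s x0 F W C"
proof -
  obtain A where "A \<in> sets coin_space" "0 < emeasure coin_space A"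
    and A: "\<And>\<omega> i k. \<omega> \<in> A \<Longrightarrow> (i, k) \<in> K \<Longrightarrow> gather_coef (speed_ratio s) (\<lambda>j. \<omega> (i, k, j)) = c i k"
    by (rule coin_space_gather_coefs[OF assms(3,4)]) auto
  moreover have "gathers gather_alg (speed_ratio s) s x0 F W C (\<lambda>i k j. \<omega> (i, k, j))" if "\<omega> \<in> A" for \<omega>
  proof (rule gathers_if_line_gathering[OF distinct frames], rule gathering)
    fix i k assume "(i, k) \<in> K"
    with that show "gather_coef (speed_ratio s) (\<lambda>j. \<omega> (i, k, j)) = c i k" by (rule A)
  qed
  ultimately show ?thesis
    unfolding gathers_with_positive_probability_def by (intro bexI[of _ A]) simp_all
qed

lemma coincident_with_positive_probability:
  assumes "x0 True = x0 False"
  shows "gathers_with_positive_probability alg s x0 F W C"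
  using coin_space_cylinder[of "{}" "\<lambda>_. True"] gathers_coincident[OF assms]
  unfolding gathers_with_positive_probability_def by (intro bexI[of _ UNIV]) auto

lemma chase_with_positive_probability:
  assumes speeds: "\<And>i. 0 < s i" and frames: "\<And>i k. fst (F i k) \<noteq> 0"
    and undelayed: "\<And>k. W False k = 0" "\<And>k. C False k = 0"
    and delays: "\<And>k. 0 \<le> W True k" "\<And>k. 0 \<le> C True k"
    and distinct: "x0 True \<noteq> x0 False"
    and reached: "cmod (x0 True - x0 False) / s False \<le> W True 0 + C True 0"
  shows "gathers_with_positive_probability gather_alg s x0 F W C"
proof (rule positive_probability_if_line_gathering[OF distinct frames])
  show "finite {(False, 0), (True, 0 :: nat)}" by simp
  show "(if i then 0 else 1) \<in> gather_coefs (speed_ratio s)" for i :: bool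
    by (simp add: gather_coefs_def)
  fix c' :: "bool \<Rightarrow> nat \<Rightarrow> real"
  assume "\<And>i k. (i, k) \<in> {(False, 0), (True, 0)} \<Longrightarrow> c' i k = (if i then 0 else 1)"
  then show "line_gathering W C (\<lambda>i. s i / cmod (x0 True - x0 False)) c'"
    using speeds distinct reached by (intro line_gathering_chase undelayed delays) auto
qed

lemma exists_power_between:
  fixes \<rho> y :: real
  assumes "0 < \<rho>" "\<rho> < 1" "0 < y" "y \<le> 1"
  shows "\<exists>k. \<rho> * y \<le> \<rho> ^ k \<and> \<rho> ^ k < y"
proof -
  have ex: "\<exists>k. \<rho> ^ k < y" using real_arch_pow_inv assms by blast
  define k where "k = (LEAST k. \<rho> ^ k < y)"
  have below: "\<rho> ^ k < y" unfolding k_def by (rule LeastI_ex[OF ex])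
  then obtain j where j: "k = Suc j" using assms by (cases k) auto
  then have "\<not> \<rho> ^ j < y" unfolding k_def by (metis lessI not_less_Least)
  then have "\<rho> * y \<le> \<rho> ^ k" using j assms by (simp add: mult_left_mono)
  with below show ?thesis by blast
qed

lemma geometric_coef_between:
  fixes p q M :: real
  assumes p: "0 < p" and q: "0 < q" and M: "0 \<le> M" "p * M < 1"
  shows "\<exists>m. let a = 1 - (1 - p / (p + q) / 2) ^ m in M < a / p \<and> a < 1 - (a / p - M) * q"
proof -
  define f where "f = p / (p + q)"
  define \<rho> where "\<rho> = 1 - f / 2"
  have f: "0 < f" "f < 1" using p q by (simp_all add: f_def)
  obtain m where m: "\<rho> * (1 - p * M) \<le> \<rho> ^ m" "\<rho> ^ m < 1 - p * M"
    using exists_power_between[of \<rho> "1 - p * M"] f M p by (auto simp: \<rho>_def)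
  define a where "a = 1 - \<rho> ^ m"
  have "p * M < a" using m(2) by (simp add: a_def)
  then have late: "M < a / p" using p by (simp add: field_simps)
  have "(1 - f) * (1 - p * M) < \<rho> * (1 - p * M)"
    using f M by (intro mult_strict_right_mono) (simp_all add: \<rho>_def)
  then have "a < f + (1 - f) * (p * M)" using m(1) by (simp add: a_def algebra_simps)
  moreover have "f + (1 - f) * (p * M) = (p + q * (p * M)) / (p + q)"
  proof -
    have "1 - f = q / (p + q)" using p q by (simp add: f_def field_simps)
    then show ?thesis by (simp add: f_def add_divide_distrib)
  qed
  ultimately have "a * (p + q) < p + q * (p * M)"
    using p q by (simp add: pos_less_divide_eq)
  moreover have "(1 - (a / p - M) * q) * p = p - a * q + q * (p * M)"
    using p by (simp add: field_simps)
  ultimately have "a * p < (1 - (a / p - M) * q) * p"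
    by (simp add: algebra_simps)
  then have ahead: "a < 1 - (a / p - M) * q" using p by simp
  show ?thesis using late ahead unfolding Let_def a_def \<rho>_def f_def by blast
qed

lemma meeting_with_positive_probability:
  assumes speeds: "\<And>i. 0 < s i" and frames: "\<And>i k. fst (F i k) \<noteq> 0"
    and undelayed: "\<And>k. W False k = 0" "\<And>k. C False k = 0"
    and delays: "\<And>k. 0 \<le> W True k" "\<And>k. 0 \<le> C True k"
    and distinct: "x0 True \<noteq> x0 False"
    and far: "W True 0 + C True 0 < cmod (x0 True - x0 False) / s False"
  shows "gathers_with_positive_probability gather_alg s x0 F W C"
proof -
  define v where "v i = s i / cmod (x0 True - x0 False)" for i
  define f where "f = v False / (v False + v True)"
  have v: "0 < v False" "0 < v True" using speeds distinct by (simp_all add: v_def)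
  have "0 \<le> W True 0 + C True 0" using delays by (simp add: add_nonneg_nonneg)
  moreover have "v False * (W True 0 + C True 0) < 1"
    using far speeds distinct by (simp add: v_def field_simps)
  ultimately obtain m where "let a = 1 - (1 - f / 2) ^ m in
      W True 0 + C True 0 < a / v False \<and> a < 1 - (a / v False - (W True 0 + C True 0)) * v True"
    using geometric_coef_between[OF v] unfolding f_def by blast
  then obtain a where a: "a = 1 - (1 - f / 2) ^ m" and late: "W True 0 + C True 0 < a / v False"
    and ahead: "a < 1 - (a / v False - (W True 0 + C True 0)) * v True"
    unfolding Let_def by blast
  have f_speeds: "f = meeting_fraction (speed_ratio s) (s True \<le> s False)"
    using meeting_fraction_speed_ratio[of s False] speeds distinct
    by (simp add: f_def v_def add_divide_distrib[symmetric])
  show ?thesis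
  proof (rule positive_probability_if_line_gathering[OF distinct frames,
        where K = "UNIV \<times> {0, 1}" and c = "\<lambda>i k. if i then 1 else if k = 0 then a else f"])
    show "finite ((UNIV :: bool set) \<times> {0, 1 :: nat})" by simp
    show "(if i then 1 else if k = 0 then a else f) \<in> gather_coefs (speed_ratio s)" for i k
      unfolding gather_coefs_def a f_speeds by auto
    fix c' :: "bool \<Rightarrow> nat \<Rightarrow> real"
    assume "\<And>i k. (i, k) \<in> UNIV \<times> {0, 1} \<Longrightarrow> c' i k = (if i then 1 else if k = 0 then a else f)"
    then interpret meeting_run W C v c' a
      using v undelayed delays late ahead by unfold_locales (simp_all add: f_def)
    show "line_gathering W C (\<lambda>i. s i / cmod (x0 True - x0 False)) c'"
      using line_gathering_meeting unfolding v_def .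
  qed
qed

theorem theorem4:
  shows "\<exists>alg :: algorithm. \<forall>(s :: bool \<Rightarrow> real) (x0 :: bool \<Rightarrow> complex)
           (F :: bool \<Rightarrow> nat \<Rightarrow> frame) (W :: bool \<Rightarrow> nat \<Rightarrow> real) (C :: bool \<Rightarrow> nat \<Rightarrow> real).
     (\<forall>i. 0 < s i) \<and> (\<forall>i k. fst (F i k) \<noteq> 0) \<and>
     (\<forall>k. W False k = 0 \<and> C False k = 0) \<and>
     (\<forall>k. 0 \<le> W True k \<and> 0 \<le> C True k) \<longrightarrow>
     (\<exists>A\<in>sets coin_space. 0 < emeasure coin_space A \<and>
        (\<forall>\<omega>\<in>A. gathers alg (speed_ratio s) s x0 F W C (\<lambda>i k j. \<omega> (i, k, j))))"
proof (intro exI[of _ gather_alg] allI impI)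
  fix s :: "bool \<Rightarrow> real" and x0 :: "bool \<Rightarrow> complex" and F :: "bool \<Rightarrow> nat \<Rightarrow> frame"
    and W C :: "bool \<Rightarrow> nat \<Rightarrow> real"
  assume "(\<forall>i. 0 < s i) \<and> (\<forall>i k. fst (F i k) \<noteq> 0) \<and>
    (\<forall>k. W False k = 0 \<and> C False k = 0) \<and> (\<forall>k. 0 \<le> W True k \<and> 0 \<le> C True k)"
  then have speeds: "\<And>i. 0 < s i" and frames: "\<And>i k. fst (F i k) \<noteq> 0"
    and undelayed: "\<And>k. W False k = 0" "\<And>k. C False k = 0"
    and delays: "\<And>k. 0 \<le> W True k" "\<And>k. 0 \<le> C True k"
    by auto
  have "gathers_with_positive_probability gather_alg s x0 F W C"
  proof (cases "x0 True = x0 False")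
    case True
    then show ?thesis by (rule coincident_with_positive_probability)
  next
    case False
    then show ?thesis
      using chase_with_positive_probability[OF speeds frames undelayed delays False]
        meeting_with_positive_probability[OF speeds frames undelayed delays False]
      by (cases "cmod (x0 True - x0 False) / s False \<le> W True 0 + C True 0") auto
  qed
  then show "\<exists>A\<in>sets coin_space. 0 < emeasure coin_space A \<and>
      (\<forall>\<omega>\<in>A. gathers gather_alg (speed_ratio s) s x0 F W C (\<lambda>i k j. \<omega> (i, k, j)))"
    unfolding gathers_with_positive_probability_def .
qed

end
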